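(* Let $\beta>0$, $T>0$, $\lambda>0$, put $M=\beta T$, and let $B_M$ satisfy $0<B_M<\beta T$. Let $T_{\text{th}}=\dfrac{M}{\ln(1+M/\lambda)}$ and, for $x\ge 0$, $$P_{e|1}(x)=\sum_{y\in\mathbb{Z}_{\ge 0},\, y<T_{\text{th}}} e^{-(x+\lambda)}\frac{(x+\lambda)^y}{y!}.$$ Consider the optimization problem over real sequences $\{\Delta_i\}_{i=1}^\infty$: $$\min_{\{\Delta_i\}} F(\{\Delta_i\})=\sum_{j=1}^{\infty}\frac{1}{2^{j}}P_{e|1}(M+\Delta_j)\quad\text{s.t.}\quad B_M-\sum_{j=1}^{i}\Delta_j\ge 0\ \text{ and }\ \sum_{j=1}^{i}\Delta_j\ge 0\ \text{ for all } i\ge 1.$$ Then the optimal solution $\{\Delta^*_i\}_{i=1}^\infty$ of this problem is a decreasing (i.e. $\Delta^*_{i+1}\le \Delta^*_i$ for all $i$) sequence of nonnegative numbers.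
   Context: This is the "no-ISI" adaptive release-duration problem for a molecular transmitter with molecule production rate $\beta$, slot length $T$, storage capacity $B_M=\beta(T-T_M)$ (with $T_M$ the non-adaptive release duration); $\Delta_i$ is the increment of the number of released molecules (for bit "1") in state $s_{i-1}$, i.e. after $i-1$ consecutive "1"s following the last "0". $P_{e|1}(x)$ is the probability that a Poisson$(x+\lambda)$ count falls below the fixed threshold $T_{\text{th}}$. The paper assumes $M\gg\lambda$, so that $T_{\text{th}}<M$. *)

theory Defs
  imports Complex_Main
begin

definition T_th :: "real \<Rightarrow> real \<Rightarrow> real" where
  "T_th M lam = M / ln (1 + M / lam)"

definition P_e1 :: "real \<Rightarrow> real \<Rightarrow> real \<Rightarrow> real" where
  "P_e1 th lam x = (\<Sum>y\<in>{y::nat. real y < th}. exp (-(x + lam)) * (x + lam) ^ y / fact y)"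

(* sequences Delta are indexed from 1; the value Delta 0 is irrelevant *)
definition feasible :: "real \<Rightarrow> (nat \<Rightarrow> real) \<Rightarrow> bool" where
  "feasible B_M \<Delta> \<longleftrightarrow> (\<forall>i\<ge>1. B_M - (\<Sum>j=1..i. \<Delta> j) \<ge> 0 \<and> (\<Sum>j=1..i. \<Delta> j) \<ge> 0)"

definition objective :: "real \<Rightarrow> real \<Rightarrow> real \<Rightarrow> (nat \<Rightarrow> real) \<Rightarrow> real" where
  "objective M th lam \<Delta> = (\<Sum>j. (1 / 2 ^ (Suc j)) * P_e1 th lam (M + \<Delta> (Suc j)))"

end

(* Write P x = P_e1 (M + x). With k the largest integer below T_th, P x is the Poisson
   distribution function F_k at M + x + lam, whose derivative is minus the Poisson weight p_k.
   As k \<le> T_th \<le> M + lam, p_k decreases beyond M + lam; the choice of T_th gives exactly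
   p_k lam \<ge> p_k (M + lam), so by log-concavity p_k \<ge> c := p_k (M + lam) on [lam, M + lam].
   Hence P falls with slope at least c on [-B_M, 0] and at most c on [0, \<infinity>).

   A negative increment is then never optimal: replacing the partial sums by their running
   maximum changes the j-th cost term by at most c times the increment of the gap between the
   partial sums and their running maximum, and summation by parts against the halving weights
   2^-j makes the total change strictly negative. Two adjacent nonnegative increments in
   increasing order are not optimal either: swapping them keeps feasibility and, the weights
   being decreasing and P strictly decreasing, lowers the cost. *)

theory Submission
  imports Defs "HOL-Analysis.Convex"
begin

definition poisson_prob :: "nat \<Rightarrow> real \<Rightarrow> real" where
  "poisson_prob k \<mu> = exp (- \<mu>) * \<mu> ^ k / fact k"

definition poisson_cdf :: "nat \<Rightarrow> real \<Rightarrow> real" where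
  "poisson_cdf k \<mu> = (\<Sum>y\<le>k. poisson_prob y \<mu>)"

lemma poisson_prob_pos: "0 < \<mu> \<Longrightarrow> 0 < poisson_prob k \<mu>"
  unfolding poisson_prob_def by simp

lemma poisson_prob_eq_exp: "0 < \<mu> \<Longrightarrow> poisson_prob k \<mu> = exp (real k * ln \<mu> - \<mu>) / fact k"
  unfolding poisson_prob_def by (simp add: exp_diff exp_of_nat_mult exp_minus field_simps)

lemma poisson_prob_antimono_above_mode:
  assumes "0 < a" "real k \<le> a" "a \<le> b"
  shows "poisson_prob k b \<le> poisson_prob k a"
proof -
  have "ln b - ln a \<le> b / a - 1"
    using assms ln_le_minus_one[of "b / a"] by (simp add: ln_div)
  then have "real k * (ln b - ln a) \<le> real k * (b / a - 1)"
    by (intro mult_left_mono) auto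
  also have "\<dots> = (real k / a) * (b - a)"
    using assms by (simp add: field_simps)
  also have "\<dots> \<le> b - a"
    using assms by (intro mult_left_le_one_le) auto
  finally show ?thesis
    using assms by (simp add: poisson_prob_eq_exp divide_right_mono algebra_simps)
qed

text \<open>The exponent \<open>k ln \<mu> - \<mu>\<close> is concave, so on an interval it is bounded below by its
  smaller endpoint value.\<close>
lemma poisson_prob_ge_min:
  assumes "0 < a" "a \<le> \<mu>" "\<mu> \<le> b"
  shows "min (poisson_prob k a) (poisson_prob k b) \<le> poisson_prob k \<mu>"
proof (cases "a = b")
  case False
  define t where "t = (b - \<mu>) / (b - a)"
  have tba: "t * (b - a) = b - \<mu>"
    using assms False by (simp add: t_def)
  have t: "0 \<le> t" "t \<le> 1" "(1 - t) * b + t * a = \<mu>"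
  proof -
    show "0 \<le> t" "t \<le> 1" using assms False by (auto simp: t_def field_simps)
    have "(1 - t) * b + t * a = b - t * (b - a)" by (simp add: algebra_simps)
    then show "(1 - t) * b + t * a = \<mu>" using tba by simp
  qed
  define h where "h x = real k * ln x - x" for x
  have "(1 - t) * ln b + t * ln a \<le> ln \<mu>"
    using concave_onD[OF ln_concave, of t b a] assms t by simp
  then have "real k * ((1 - t) * ln b + t * ln a) \<le> real k * ln \<mu>"
    by (intro mult_left_mono) auto
  then have "(1 - t) * h b + t * h a \<le> h \<mu>"
    using t(3) unfolding h_def by (simp add: algebra_simps)
  moreover have "min (h a) (h b) \<le> (1 - t) * h b + t * h a"
  proof -
    have "(1 - t) * min (h a) (h b) \<le> (1 - t) * h b" "t * min (h a) (h b) \<le> t * h a"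
      using t by (intro mult_left_mono; simp)+
    then show ?thesis by (simp add: algebra_simps)
  qed
  ultimately have "min (h a) (h b) \<le> h \<mu>" by simp
  moreover have "min (poisson_prob k a) (poisson_prob k b) = exp (min (h a) (h b)) / fact k"
  proof -
    have "mono (\<lambda>x::real. exp x / fact k)" by (intro monoI divide_right_mono) auto
    then show ?thesis
      using assms min_of_mono[of "\<lambda>x. exp x / fact k"] by (simp add: poisson_prob_eq_exp h_def)
  qed
  ultimately show ?thesis
    using assms by (simp add: poisson_prob_eq_exp h_def divide_right_mono)
next
  case True
  with assms have "\<mu> = a" "\<mu> = b" by simp_all
  then show ?thesis by simp
qed

lemma poisson_cdf_has_real_derivative:
  "(poisson_cdf k has_real_derivative - poisson_prob k \<mu>) (at \<mu>)"
proof (induction k)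
  case 0
  show ?case unfolding poisson_cdf_def poisson_prob_def by (auto intro!: derivative_eq_intros)
next
  case (Suc k)
  have "((\<lambda>\<mu>. exp (- \<mu>) * \<mu> ^ Suc k) has_real_derivative
          exp (- \<mu>) * (real (Suc k) * \<mu> ^ k) - exp (- \<mu>) * \<mu> ^ Suc k) (at \<mu>)"
  proof -
    have "((\<lambda>\<mu>. exp (- \<mu>)) has_real_derivative - exp (- \<mu>)) (at \<mu>)"
      by (auto intro!: derivative_eq_intros)
    from DERIV_mult[OF this DERIV_pow[of "Suc k" \<mu>]] show ?thesis
      by (simp add: algebra_simps)
  qed
  from DERIV_cdivide[OF this, of "fact (Suc k)"]
  have "(poisson_prob (Suc k) has_real_derivative
          poisson_prob k \<mu> - poisson_prob (Suc k) \<mu>) (at \<mu>)"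
    unfolding poisson_prob_def by (simp add: diff_divide_distrib)
  from DERIV_add[OF Suc this] show ?case
    by (simp add: poisson_cdf_def fun_eq_iff)
qed

lemma poisson_cdf_mvt:
  assumes "a < b"
  obtains z where "a < z" "z < b" "poisson_cdf k a - poisson_cdf k b = (b - a) * poisson_prob k z"
proof -
  obtain z where z: "a < z" "z < b" "poisson_cdf k b - poisson_cdf k a = (b - a) * - poisson_prob k z"
    using MVT2[OF assms, of "poisson_cdf k" "\<lambda>z. - poisson_prob k z"] poisson_cdf_has_real_derivative
    by blast
  moreover from z(3) have "poisson_cdf k a - poisson_cdf k b = (b - a) * poisson_prob k z"
    by (simp add: algebra_simps)
  ultimately show ?thesis using that by blast
qed

lemma poisson_cdf_strict_antimono:
  assumes "0 \<le> a" "a < b"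
  shows "poisson_cdf k b < poisson_cdf k a"
proof -
  obtain z where "a < z" "poisson_cdf k a - poisson_cdf k b = (b - a) * poisson_prob k z"
    using poisson_cdf_mvt[OF assms(2)] by blast
  moreover have "0 < (b - a) * poisson_prob k z"
    using assms \<open>a < z\<close> poisson_prob_pos[of z k] by simp
  ultimately show ?thesis by simp
qed

lemma poisson_cdf_diff_ge:
  assumes "a \<le> b" "\<And>z. a < z \<Longrightarrow> z < b \<Longrightarrow> c \<le> poisson_prob k z"
  shows "c * (b - a) \<le> poisson_cdf k a - poisson_cdf k b"
proof (cases "a = b")
  case False
  then obtain z where "a < z" "z < b" "poisson_cdf k a - poisson_cdf k b = (b - a) * poisson_prob k z"
    using poisson_cdf_mvt[of a b k] assms(1) by auto
  with assms show ?thesis by (simp add: mult.commute mult_right_mono)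
qed simp

lemma poisson_cdf_diff_le:
  assumes "a \<le> b" "\<And>z. a < z \<Longrightarrow> z < b \<Longrightarrow> poisson_prob k z \<le> c"
  shows "poisson_cdf k a - poisson_cdf k b \<le> c * (b - a)"
proof (cases "a = b")
  case False
  then obtain z where "a < z" "z < b" "poisson_cdf k a - poisson_cdf k b = (b - a) * poisson_prob k z"
    using poisson_cdf_mvt[of a b k] assms(1) by auto
  with assms show ?thesis by (simp add: mult.commute mult_right_mono)
qed simp

lemma P_e1_eq_poisson_cdf:
  assumes "0 < th"
  obtains k where "real k < th" "\<And>x. P_e1 th lam x = poisson_cdf k (x + lam)"
proof
  let ?k = "nat \<lceil>th\<rceil> - 1"
  have below: "real y < th \<longleftrightarrow> y \<le> ?k" for y
    using assms by linarith
  then show "real ?k < th" by simp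
  show "P_e1 th lam x = poisson_cdf ?k (x + lam)" for x
    unfolding P_e1_def poisson_cdf_def poisson_prob_def below atMost_def ..
qed

lemma T_th_pos:
  assumes "0 < lam" "0 < M"
  shows "0 < T_th M lam"
proof -
  have "0 < ln (1 + M / lam)" using assms by (intro ln_gt_zero) simp
  with assms show ?thesis unfolding T_th_def by simp
qed

lemma T_th_le:
  assumes "0 < lam" "0 < M"
  shows "T_th M lam \<le> M + lam"
proof -
  have "ln (lam / (M + lam)) \<le> lam / (M + lam) - 1"
    using assms by (intro ln_le_minus_one) simp
  then have "M / (M + lam) \<le> ln (1 + M / lam)"
    using assms by (simp add: ln_div field_simps)
  with assms show ?thesis
    unfolding T_th_def by (simp add: divide_le_eq field_simps)
qed

text \<open>This is where the choice of threshold enters: \<open>k ln (1 + M / lam) \<le> M\<close>.\<close>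
lemma poisson_prob_le_below_threshold:
  assumes "0 < lam" "0 < M" "real k \<le> T_th M lam"
  shows "poisson_prob k (M + lam) \<le> poisson_prob k lam"
proof -
  have L: "0 < ln (1 + M / lam)" using assms by (intro ln_gt_zero) simp
  have "real k * ln (1 + M / lam) \<le> T_th M lam * ln (1 + M / lam)"
    using assms L by (intro mult_right_mono) auto
  also have "\<dots> = M" unfolding T_th_def using L by simp
  finally have "real k * ln (M + lam) - (M + lam) \<le> real k * ln lam - lam"
    using assms by (simp add: ln_div field_simps)
  then show ?thesis
    using assms by (simp add: poisson_prob_eq_exp divide_right_mono)
qed

lemma P_e1_steep_left_flat_right:
  assumes lam: "0 < lam" and B: "0 < B" "B < M"
  defines "P \<equiv> \<lambda>x. P_e1 (T_th M lam) lam (M + x)"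
  obtains c where "0 < c" "strict_antimono_on {-B..B} P"
    "\<forall>x\<in>{-B..0}. P 0 \<le> P x + c * x" "mono_on {0..} (\<lambda>x. P x + c * x)"
proof -
  obtain k where k: "real k < T_th M lam" and P: "\<And>x. P x = poisson_cdf k (M + x + lam)"
    using P_e1_eq_poisson_cdf[OF T_th_pos] lam B unfolding P_def
    by (metis add.commute add.left_commute less_trans)
  define c where "c = poisson_prob k (M + lam)"
  have c_le: "c \<le> poisson_prob k lam"
    unfolding c_def using lam B k by (intro poisson_prob_le_below_threshold) auto
  show ?thesis
  proof
    show "0 < c" unfolding c_def using lam B by (intro poisson_prob_pos) simp
    show "strict_antimono_on {-B..B} P"
      using lam B by (auto intro!: monotone_onI poisson_cdf_strict_antimono simp: P)
    show "\<forall>x\<in>{-B..0}. P 0 \<le> P x + c * x"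
    proof
      fix x assume x: "x \<in> {-B..0}"
      have "c \<le> poisson_prob k z" if "M + x + lam < z" "z < M + lam" for z
        using poisson_prob_ge_min[of lam z "M + lam" k] that x lam B c_le
        by (simp add: c_def min_def split: if_splits)
      from poisson_cdf_diff_ge[of "M + x + lam" "M + lam" c k, OF _ this] x
      show "P 0 \<le> P x + c * x" by (simp add: P algebra_simps)
    qed
    show "mono_on {0..} (\<lambda>x. P x + c * x)"
    proof (rule mono_onI)
      fix x y :: real assume "x \<in> {0..}" "y \<in> {0..}" "x \<le> y"
      have "poisson_prob k z \<le> c" if "M + x + lam < z" for z
        unfolding c_def using that lam B k T_th_le[of lam M] \<open>x \<in> {0..}\<close>
        by (intro poisson_prob_antimono_above_mode) auto
      from poisson_cdf_diff_le[of "M + x + lam" "M + y + lam" k c, OF _ this] \<open>x \<le> y\<close>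
      show "P x + c * x \<le> P y + c * y" by (simp add: P algebra_simps)
    qed
  qed
qed

definition weighted_cost :: "(real \<Rightarrow> real) \<Rightarrow> (nat \<Rightarrow> real) \<Rightarrow> real" where
  "weighted_cost P \<Delta> = (\<Sum>j. P (\<Delta> (Suc j)) / 2 ^ Suc j)"

lemma objective_eq_weighted_cost:
  "objective M th lam \<Delta> = weighted_cost (\<lambda>x. P_e1 th lam (M + x)) \<Delta>"
  unfolding objective_def weighted_cost_def by simp

lemma summable_div_two_power:
  fixes h :: "nat \<Rightarrow> real"
  assumes "\<And>j. \<bar>h j\<bar> \<le> C"
  shows "summable (\<lambda>j. h j / 2 ^ Suc j)"
proof (rule summable_comparison_test')
  show "summable (\<lambda>j. C * (1 / 2) ^ j)"
    by (intro summable_mult summable_geometric) simp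
  show "norm (h j / 2 ^ Suc j) \<le> C * (1 / 2) ^ j" for j
    using assms[of j] by (simp add: power_one_over field_simps)
qed

lemma suminf_increments_div_two_power:
  fixes D :: "nat \<Rightarrow> real"
  assumes "\<And>j. \<bar>D j\<bar> \<le> C" "D 0 = 0"
  shows "(\<Sum>j. (D (Suc j) - D j) / 2 ^ Suc j) = (\<Sum>j. D (Suc j) / 2 ^ Suc j) / 2"
proof -
  have sD: "summable (\<lambda>j. D j / 2 ^ Suc j)"
    using assms(1) by (rule summable_div_two_power)
  have sDS: "summable (\<lambda>j. D (Suc j) / 2 ^ Suc j)"
    using assms(1) by (rule summable_div_two_power)
  have "(\<Sum>j. D j / 2 ^ Suc j) = (\<Sum>j. D (Suc j) / 2 ^ Suc j / 2)"
    using suminf_split_head[OF sD] assms(2) by (simp add: field_simps)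
  also have "\<dots> = (\<Sum>j. D (Suc j) / 2 ^ Suc j) / 2"
    using sDS by (rule suminf_divide)
  finally show ?thesis
    using suminf_diff[OF sDS sD] by (simp add: diff_divide_distrib)
qed

lemma feasible_iff_partial_sums:
  "feasible B \<Delta> \<longleftrightarrow> (\<forall>i. 0 \<le> (\<Sum>j=1..i. \<Delta> j) \<and> (\<Sum>j=1..i. \<Delta> j) \<le> B)"
proof
  assume feas: "feasible B \<Delta>"
  then have "0 \<le> B" unfolding feasible_def by force
  show "\<forall>i. 0 \<le> (\<Sum>j=1..i. \<Delta> j) \<and> (\<Sum>j=1..i. \<Delta> j) \<le> B"
  proof
    fix i :: nat
    show "0 \<le> (\<Sum>j=1..i. \<Delta> j) \<and> (\<Sum>j=1..i. \<Delta> j) \<le> B"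
      using feas \<open>0 \<le> B\<close> unfolding feasible_def by (cases "i = 0") auto
  qed
qed (simp add: feasible_def)

lemma feasible_increment_bound:
  assumes "feasible B \<Delta>"
  shows "\<bar>\<Delta> (Suc j)\<bar> \<le> B"
proof -
  have "(\<Sum>l=1..Suc j. \<Delta> l) = (\<Sum>l=1..j. \<Delta> l) + \<Delta> (Suc j)"
    by simp
  with assms show ?thesis
    unfolding feasible_iff_partial_sums by (smt (verit))
qed

lemma antimono_on_interval_bound:
  fixes P :: "real \<Rightarrow> real"
  assumes "antimono_on {a..b} P" "x \<in> {a..b}"
  shows "\<bar>P x\<bar> \<le> \<bar>P a\<bar> + \<bar>P b\<bar>"
  using monotone_onD[OF assms(1), of a x] monotone_onD[OF assms(1), of x b] assms(2) by auto

lemma feasible_cost_term_bound: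
  fixes P :: "real \<Rightarrow> real"
  assumes "antimono_on {-B..B} P" "feasible B \<Delta>"
  shows "\<bar>P (\<Delta> (Suc j))\<bar> \<le> \<bar>P (-B)\<bar> + \<bar>P B\<bar>"
  using antimono_on_interval_bound[OF assms(1)] feasible_increment_bound[OF assms(2), of j]
  by (simp add: abs_le_iff)

lemma weighted_cost_diff:
  fixes P :: "real \<Rightarrow> real"
  assumes "antimono_on {-B..B} P" "feasible B \<Delta>" "feasible B \<Delta>'"
  shows "weighted_cost P \<Delta>' - weighted_cost P \<Delta>
           = (\<Sum>j. (P (\<Delta>' (Suc j)) - P (\<Delta> (Suc j))) / 2 ^ Suc j)"
proof -
  have "summable (\<lambda>j. P (\<delta> (Suc j)) / 2 ^ Suc j)" if "feasible B \<delta>" for \<delta>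
    using feasible_cost_term_bound[OF assms(1) that] by (rule summable_div_two_power)
  then show ?thesis
    unfolding weighted_cost_def using assms(2,3) by (simp add: suminf_diff diff_divide_distrib)
qed

text \<open>Here \<open>s\<close>, \<open>s'\<close> are consecutive partial sums and \<open>r\<close> the running maximum up to \<open>s\<close>.
  The bound holds because \<open>P\<close> falls at rate at least \<open>c\<close> left of \<open>0\<close> and at most \<open>c\<close> right of it.\<close>
lemma running_max_step_cost:
  fixes P :: "real \<Rightarrow> real"
  assumes steep: "\<forall>x\<in>{-B..0}. P 0 \<le> P x + c * x"
    and flat: "mono_on {0..} (\<lambda>x. P x + c * x)"
    and "s \<le> r" "\<bar>s' - s\<bar> \<le> B"
  shows "P (max r s' - r) - P (s' - s) \<le> c * ((s' - max r s') - (s - r))"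
proof (cases "s' \<le> r")
  case True
  show ?thesis
  proof (cases "s' - s \<le> 0")
    case True
    with steep assms(4) have "P 0 \<le> P (s' - s) + c * (s' - s)" by auto
    then show ?thesis using \<open>s' \<le> r\<close> by (simp add: max_def)
  next
    case False
    with monotone_onD[OF flat, of 0 "s' - s"] show ?thesis using \<open>s' \<le> r\<close> by (simp add: max_def)
  qed
next
  case False
  with monotone_onD[OF flat, of "s' - r" "s' - s"] assms(3) show ?thesis
    by (simp add: max_def algebra_simps)
qed

lemma weighted_cost_less_of_gap_increments:
  fixes P :: "real \<Rightarrow> real" and D :: "nat \<Rightarrow> real"
  assumes anti: "antimono_on {-B..B} P" and feas: "feasible B \<Delta>" "feasible B \<Delta>'" and "0 < c"
    and step: "\<And>j. P (\<Delta>' (Suc j)) - P (\<Delta> (Suc j)) \<le> c * (D (Suc j) - D j)"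
    and D: "D 0 = 0" "\<And>j. \<bar>D j\<bar> \<le> B" "\<And>j. D j \<le> 0" "D (Suc i) < 0"
  shows "weighted_cost P \<Delta>' < weighted_cost P \<Delta>"
proof -
  have "\<bar>P (\<Delta>' (Suc j)) - P (\<Delta> (Suc j))\<bar> \<le> 2 * (\<bar>P (-B)\<bar> + \<bar>P B\<bar>)" for j
    using feasible_cost_term_bound[OF anti feas(1), of j] feasible_cost_term_bound[OF anti feas(2), of j]
      abs_triangle_ineq4[of "P (\<Delta>' (Suc j))" "P (\<Delta> (Suc j))"] by (smt (verit))
  then have "summable (\<lambda>j. (P (\<Delta>' (Suc j)) - P (\<Delta> (Suc j))) / 2 ^ Suc j)"
    by (rule summable_div_two_power)
  moreover have sD: "summable (\<lambda>j. (D (Suc j) - D j) / 2 ^ Suc j)"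
  proof (rule summable_div_two_power)
    show "\<bar>D (Suc j) - D j\<bar> \<le> 2 * B" for j
      using D(2)[of j] D(2)[of "Suc j"] by (smt (verit))
  qed
  ultimately have "weighted_cost P \<Delta>' - weighted_cost P \<Delta>
      \<le> (\<Sum>j. c * ((D (Suc j) - D j) / 2 ^ Suc j))"
    unfolding weighted_cost_diff[OF anti feas] using step
    by (intro suminf_le summable_mult) (auto simp: divide_right_mono)
  also have "\<dots> = c * ((\<Sum>j. D (Suc j) / 2 ^ Suc j) / 2)"
    using suminf_mult[OF sD, of c] suminf_increments_div_two_power[of D B, OF D(2) D(1)] by simp
  also have "\<dots> < 0"
  proof -
    have sDS: "summable (\<lambda>j. D (Suc j) / 2 ^ Suc j)"
      using D(2) by (rule summable_div_two_power)
    have "0 < (\<Sum>j. - (D (Suc j) / 2 ^ Suc j))"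
      using D(3,4)
      by (intro suminf_pos2[OF summable_minus[OF sDS], of i]) (auto simp: divide_nonpos_pos divide_neg_pos)
    then have "(\<Sum>j. D (Suc j) / 2 ^ Suc j) < 0"
      unfolding suminf_minus[OF sDS] by simp
    then show ?thesis
      using \<open>0 < c\<close> by (simp add: mult_pos_neg)
  qed
  finally show ?thesis by simp
qed

lemma weighted_cost_running_max_less:
  fixes P :: "real \<Rightarrow> real"
  assumes anti: "antimono_on {-B..B} P" and "0 < c"
    and steep: "\<forall>x\<in>{-B..0}. P 0 \<le> P x + c * x"
    and flat: "mono_on {0..} (\<lambda>x. P x + c * x)"
    and feas: "feasible B \<Delta>" and neg: "\<Delta> (Suc i) < 0"
  obtains \<Delta>' where "feasible B \<Delta>'" "weighted_cost P \<Delta>' < weighted_cost P \<Delta>"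
proof
  define S where "S j = (\<Sum>l=1..j. \<Delta> l)" for j
  define R where "R j = Max (S ` {..j})" for j
  define \<Delta>' where "\<Delta>' j = R j - R (j - 1)" for j
  define D where "D j = S j - R j" for j
  have S_Suc: "S (Suc j) = S j + \<Delta> (Suc j)" for j
    unfolding S_def by simp
  have S_bounds: "0 \<le> S j \<and> S j \<le> B" for j
    using feas unfolding feasible_iff_partial_sums S_def by blast
  have R_Suc: "R (Suc j) = max (R j) (S (Suc j))" for j
    unfolding R_def by (simp add: atMost_Suc max.commute)
  have S_le_R: "S j \<le> R j" for j
    unfolding R_def by simp
  have R_bounds: "0 \<le> R j \<and> R j \<le> B" for j
  proof -
    have "R j \<in> S ` {..j}" unfolding R_def by (intro Max_in) auto
    with S_bounds show ?thesis by auto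
  qed
  have "(\<Sum>l=1..j. \<Delta>' l) = R j" for j
    by (induction j) (simp_all add: \<Delta>'_def R_def S_def)
  then show feas': "feasible B \<Delta>'"
    unfolding feasible_iff_partial_sums using R_bounds by simp
  show "weighted_cost P \<Delta>' < weighted_cost P \<Delta>"
  proof (rule weighted_cost_less_of_gap_increments[OF anti feas feas' \<open>0 < c\<close>])
    show "P (\<Delta>' (Suc j)) - P (\<Delta> (Suc j)) \<le> c * (D (Suc j) - D j)" for j
      using running_max_step_cost[OF steep flat S_le_R[of j], of "S (Suc j)"]
        feasible_increment_bound[OF feas, of j]
      by (simp add: \<Delta>'_def D_def R_Suc S_Suc)
    show "D 0 = 0" by (simp add: D_def R_def)
    show "\<bar>D j\<bar> \<le> B" "D j \<le> 0" for j
      using S_bounds[of j] R_bounds[of j] S_le_R[of j] by (auto simp: D_def)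
    show "D (Suc i) < 0"
      using S_le_R[of i] neg by (simp add: D_def R_Suc S_Suc)
  qed
qed

lemma feasible_swap:
  assumes feas: "feasible B \<Delta>" and "0 \<le> \<Delta> (Suc m)" "\<Delta> (Suc m) \<le> \<Delta> (Suc (Suc m))"
  shows "feasible B (\<Delta>(Suc m := \<Delta> (Suc (Suc m)), Suc (Suc m) := \<Delta> (Suc m)))"
proof -
  define a where "a = \<Delta> (Suc m)"
  define b where "b = \<Delta> (Suc (Suc m))"
  define S where "S j = (\<Sum>l=1..j. \<Delta> l)" for j
  have S_bounds: "0 \<le> S j \<and> S j \<le> B" for j
    using feas unfolding feasible_iff_partial_sums S_def by blast
  have S_Suc: "S (Suc j) = S j + \<Delta> (Suc j)" for j
    unfolding S_def by simp
  have "(\<Sum>l=1..j. (\<Delta>(Suc m := b, Suc (Suc m) := a)) l) = S j + (if j = Suc m then b - a else 0)"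
    for j
  proof (induction j)
    case 0
    then show ?case by (simp add: S_def)
  next
    case (Suc j)
    then show ?case by (auto simp: S_Suc a_def b_def)
  qed
  moreover have "0 \<le> S m + b" "S m + b \<le> B"
    using S_bounds[of "Suc m"] S_bounds[of "Suc (Suc m)"] assms(2,3)
    by (simp_all add: S_Suc a_def b_def)
  ultimately show ?thesis
    unfolding feasible_iff_partial_sums a_def b_def using S_bounds by (simp add: S_Suc)
qed

lemma weighted_cost_swap_less:
  fixes P :: "real \<Rightarrow> real"
  assumes anti: "strict_antimono_on {-B..B} P" and feas: "feasible B \<Delta>"
    and "0 \<le> \<Delta> (Suc m)" "\<Delta> (Suc m) < \<Delta> (Suc (Suc m))"
  obtains \<Delta>' where "feasible B \<Delta>'" "weighted_cost P \<Delta>' < weighted_cost P \<Delta>"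
proof
  define a where "a = \<Delta> (Suc m)"
  define b where "b = \<Delta> (Suc (Suc m))"
  define \<Delta>' where "\<Delta>' = \<Delta>(Suc m := b, Suc (Suc m) := a)"
  show feas': "feasible B \<Delta>'"
    unfolding \<Delta>'_def a_def b_def using feasible_swap[OF feas] assms(3,4) by simp
  have anti': "antimono_on {-B..B} P"
    using anti strict_antimono_iff_antimono by blast
  have "weighted_cost P \<Delta>' - weighted_cost P \<Delta>
      = (\<Sum>j\<in>{m, Suc m}. (P (\<Delta>' (Suc j)) - P (\<Delta> (Suc j))) / 2 ^ Suc j)"
    unfolding weighted_cost_diff[OF anti' feas feas'] by (rule suminf_finite) (auto simp: \<Delta>'_def)
  also have "\<dots> = (P b - P a) / 2 ^ Suc m - (P b - P a) / 2 ^ Suc (Suc m)"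
    by (simp add: \<Delta>'_def a_def b_def diff_divide_distrib)
  also have "\<dots> = (P b - P a) / 2 ^ Suc (Suc m)"
    by (simp add: field_simps)
  also have "\<dots> < 0"
  proof -
    have "P b < P a"
      using monotone_onD[OF anti, of a b] assms(4) unfolding a_def b_def
      using feasible_increment_bound[OF feas, of m] feasible_increment_bound[OF feas, of "Suc m"]
      by (simp add: abs_le_iff)
    then show ?thesis by (simp add: divide_neg_pos)
  qed
  finally show "weighted_cost P \<Delta>' < weighted_cost P \<Delta>" by simp
qed

lemma weighted_cost_minimizer_nonneg_antimono:
  fixes P :: "real \<Rightarrow> real"
  assumes anti: "strict_antimono_on {-B..B} P" and "0 < c"
    and steep: "\<forall>x\<in>{-B..0}. P 0 \<le> P x + c * x"
    and flat: "mono_on {0..} (\<lambda>x. P x + c * x)"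
    and feas: "feasible B \<Delta>"
    and minimal: "\<forall>\<Delta>'. feasible B \<Delta>' \<longrightarrow> weighted_cost P \<Delta> \<le> weighted_cost P \<Delta>'"
  shows "0 \<le> \<Delta> (Suc i)" "\<Delta> (Suc (Suc i)) \<le> \<Delta> (Suc i)"
proof -
  have anti': "antimono_on {-B..B} P"
    using anti strict_antimono_iff_antimono by blast
  show nonneg: "0 \<le> \<Delta> (Suc j)" for j
  proof (rule ccontr)
    assume "\<not> 0 \<le> \<Delta> (Suc j)"
    then have "\<Delta> (Suc j) < 0" by simp
    then obtain \<Delta>' where "feasible B \<Delta>'" "weighted_cost P \<Delta>' < weighted_cost P \<Delta>"
      by (rule weighted_cost_running_max_less[OF anti' \<open>0 < c\<close> steep flat feas])
    with minimal show False by (simp add: not_le[symmetric])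
  qed
  show "\<Delta> (Suc (Suc i)) \<le> \<Delta> (Suc i)"
  proof (rule ccontr)
    assume "\<not> \<Delta> (Suc (Suc i)) \<le> \<Delta> (Suc i)"
    then have "\<Delta> (Suc i) < \<Delta> (Suc (Suc i))" by simp
    then obtain \<Delta>' where "feasible B \<Delta>'" "weighted_cost P \<Delta>' < weighted_cost P \<Delta>"
      by (rule weighted_cost_swap_less[OF anti feas nonneg[of i]])
    with minimal show False by (simp add: not_le[symmetric])
  qed
qed

theorem lemma1:
  fixes \<beta> T lam B_M :: real and \<Delta> :: "nat \<Rightarrow> real"
  assumes "\<beta> > 0" "T > 0" "lam > 0" "0 < B_M" "B_M < \<beta> * T"
    and "feasible B_M \<Delta>"
    and "\<forall>\<Delta>'. feasible B_M \<Delta>' \<longrightarrow>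
           objective (\<beta> * T) (T_th (\<beta> * T) lam) lam \<Delta> \<le> objective (\<beta> * T) (T_th (\<beta> * T) lam) lam \<Delta>'"
  shows "\<forall>i\<ge>1. \<Delta> (i + 1) \<le> \<Delta> i \<and> 0 \<le> \<Delta> i"
proof -
  define P where "P x = P_e1 (T_th (\<beta> * T) lam) lam (\<beta> * T + x)" for x
  obtain c where "0 < c" "strict_antimono_on {-B_M..B_M} P"
    "\<forall>x\<in>{-B_M..0}. P 0 \<le> P x + c * x" "mono_on {0..} (\<lambda>x. P x + c * x)"
    using P_e1_steep_left_flat_right[of lam B_M "\<beta> * T"] assms(3-5) unfolding P_def by blast
  moreover have "\<forall>\<Delta>'. feasible B_M \<Delta>' \<longrightarrow> weighted_cost P \<Delta> \<le> weighted_cost P \<Delta>'"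
    using assms(7) unfolding objective_eq_weighted_cost P_def .
  ultimately have "0 \<le> \<Delta> (Suc m) \<and> \<Delta> (Suc (Suc m)) \<le> \<Delta> (Suc m)" for m
    using weighted_cost_minimizer_nonneg_antimono[where P = P] assms(6) by blast
  then show ?thesis
    by (metis Suc_eq_plus1 Suc_le_D One_nat_def)
qed

end
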